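(* Let $\mathfrak{g}:\mathbb{R}^{D_{\alpha}}\to\mathbb{R}^{D}$ be a $C^{2}$ function with $\mathfrak{g}(c)=\mathfrak{g}_{0}+Ac+\mathfrak{h}(c)$, where $\mathfrak{g}_{0}\in\mathbb{R}^{D}$, $A$ is a $D\times D_{\alpha}$ matrix, and $\mathfrak{g},\mathfrak{h}$ are defined for $\|c\|\leq a$ with $\|\mathfrak{h}(c)\|\leq L\|c\|^{2}$ there ($L>0$). Suppose the $\mathfrak{r}$ largest singular values of $A$ are all $\geq\sigma>0$. Then for every $\epsilon$ with $0<\epsilon^{1/2}\leq a$, the probability of the set $\{c:\|\mathfrak{g}(c)\|\leq L\epsilon\}$ relative to the ball $\{c:\|c\|\leq\epsilon^{1/2}\}$ is at most $$D_{\alpha}!\,2^{\mathfrak{r}}L^{\mathfrak{r}}\epsilon^{\mathfrak{r}/2}/\sigma^{\mathfrak{r}}.$$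
   Context: All norms are Euclidean. For measurable sets $B_{1},B_{2}$, the probability of $B_{1}$ relative to $B_{2}$ is $\mu(B_{1}\cap B_{2})/\mu(B_{2})$, where $\mu$ is Lebesgue measure on $\mathbb{R}^{D_{\alpha}}$. *)

theory Defs
  imports "HOL-Analysis.Analysis"
begin

text \<open>Singular values of a matrix A (rows indexed by 'b, columns by 'a): the square roots
of the eigenvalues of A^T A, each repeated according to its multiplicity (the dimension
of its eigenspace; A^T A is symmetric), listed in non-increasing order.\<close>

definition singular_values :: "real^'a^'b \<Rightarrow> real list" where
  "singular_values A =
     (let M = transpose A ** A in
      rev (sort (concat (map (\<lambda>e. replicate (dim {v. M *v v = e *\<^sub>R v}) (sqrt e))
        (sorted_list_of_set {e. \<exists>v. v \<noteq> 0 \<and> M *v v = e *\<^sub>R v})))))"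

definition largest_singular_values_ge :: "nat \<Rightarrow> real \<Rightarrow> real^'a^'b \<Rightarrow> bool" where
  "largest_singular_values_ge r s A \<longleftrightarrow>
     r \<le> length (singular_values A) \<and> (\<forall>i<r. singular_values A ! i \<ge> s)"

end

theory Submission
  imports Defs
begin

(* Near the origin g stays within L \<epsilon> of its affine part g0 + A c, so on the sublevel set
   the linear map A varies by at most 4 L \<epsilon>.  A unit eigenvector v of A^T A with eigenvalue
   at least \<sigma>^2 satisfies \<sigma> |c \<bullet> v| \<le> |A c|, hence the set is a slab of width 4 L \<epsilon> / \<sigma> in
   r orthonormal directions, and it lies in a cube of side 2 sqrt \<epsilon> in the others.  In a
   rotated coordinate system its volume is therefore at most (4 L \<epsilon> / \<sigma>)^r (2 sqrt \<epsilon>)^(D - r),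
   while the ball of radius sqrt \<epsilon> contains a cube of side 2 sqrt \<epsilon> / sqrt D; the ratio is
   bounded using sqrt D ^ D \<le> D!. *)

section \<open>Invariance of Lebesgue measure under orthogonal maps\<close>

lemma borel_measurable_linear:
  fixes f :: "'a::euclidean_space \<Rightarrow> 'b::euclidean_space"
  assumes "linear f"
  shows "f \<in> borel_measurable borel"
  using assms by (intro borel_measurable_continuous_onI linear_continuous_on
      linear_conv_bounded_linear[THEN iffD1])

lemma prod_Basis_vec:
  "(\<Prod>b\<in>Basis. f b) = (\<Prod>i\<in>UNIV. f (axis i (1::real)) :: 'b::comm_monoid_mult)"
  by (simp add: Basis_vec_def prod.UNION_disjoint axis_eq_axis)

lemma linear_permute_coordinates: "linear (\<lambda>v::real^'a::finite. \<chi> j::'c::finite. v $ h j)"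
  by (rule linearI) (simp_all add: vec_eq_iff)

lemma
  fixes h :: "'c::finite \<Rightarrow> 'a::finite"
  assumes "bij h"
  shows norm_permute_coordinates: "norm (\<chi> j. v $ h j) = norm (v :: real^'a)"
    and lborel_distr_permute_coordinates:
      "distr lborel borel (\<lambda>v::real^'a. \<chi> j::'c. v $ h j) = lborel"
proof -
  show "norm (\<chi> j. v $ h j) = norm v"
    using sum.reindex_bij_betw[OF assms, of "\<lambda>i. (v $ i)\<^sup>2"] by (simp add: norm_vec_def L2_set_def)
  define P where "P = (\<lambda>v::real^'a. \<chi> j::'c. v $ h j)"
  have P_meas: "P \<in> borel_measurable borel"
    unfolding P_def by (intro borel_measurable_linear linear_permute_coordinates)
  have h_inv: "h (inv h i) = i" "inv h (h j) = j" for i j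
    using assms by (simp_all add: bij_is_surj surj_f_inv_f bij_is_inj)
  show "distr lborel borel P = lborel"
  proof (rule lborel_eqI[symmetric])
    fix l u :: "real^'c"
    assume lu: "\<And>b. b \<in> Basis \<Longrightarrow> l \<bullet> b \<le> u \<bullet> b"
    have le: "l $ j \<le> u $ j" for j
      using lu[of "axis j 1"] by (auto simp: Basis_vec_def inner_axis)
    have "P -` box l u = box (\<chi> i. l $ inv h i) (\<chi> i. u $ inv h i)"
      by (auto simp: mem_box_cart P_def) (metis h_inv)+
    then have "emeasure (distr lborel borel P) (box l u)
        = emeasure lborel (box (\<chi> i. l $ inv h i) (\<chi> i. u $ inv h i))"
      by (simp add: emeasure_distr P_meas)
    also have "\<dots> = (\<Prod>b\<in>Basis. ((\<chi> i. u $ inv h i) - (\<chi> i. l $ inv h i)) \<bullet> b)"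
      by (rule emeasure_lborel_box) (auto simp: Basis_vec_def inner_axis le)
    also have "\<dots> = (\<Prod>i\<in>UNIV. u $ inv h i - l $ inv h i)"
      by (simp add: prod_Basis_vec inner_axis)
    also have "\<dots> = (\<Prod>j\<in>UNIV. u $ j - l $ j)"
      using prod.reindex_bij_betw[of "inv h" UNIV UNIV "\<lambda>j. u $ j - l $ j"] assms
      by (simp add: bij_imp_bij_inv)
    finally show "emeasure (distr lborel borel P) (box l u) = (\<Prod>b\<in>Basis. (u - l) \<bullet> b)"
      by (simp add: prod_Basis_vec inner_axis)
  qed simp
qed

lemma lborel_distr_orthogonal_wellorder:
  fixes f :: "real^'n::{finite,wellorder} \<Rightarrow> real^'n::{finite,wellorder}"
  assumes f: "orthogonal_transformation f"
  shows "distr lborel borel f = lborel"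
proof (rule lborel_eqI[symmetric])
  fix l u :: "real^'n::{finite,wellorder}"
  assume "\<And>b. b \<in> Basis \<Longrightarrow> l \<bullet> b \<le> u \<bullet> b"
  then have box: "emeasure lborel (box l u) = (\<Prod>b\<in>Basis. (u - l) \<bullet> b)"
    by (rule emeasure_lborel_box)
  have f_meas: "f \<in> borel_measurable borel"
    using f by (intro borel_measurable_linear orthogonal_transformation_linear)
  have inv_f: "orthogonal_transformation (inv f)"
    using f by (rule orthogonal_transformation_inv)
  have preimage: "f -` box l u = inv f ` box l u"
    using f by (metis orthogonal_transformation_bij bij_vimage_eq_inv_image)
  have "emeasure (distr lborel borel f) (box l u) = emeasure lebesgue (inv f ` box l u)"
    using f_meas measurable_sets_borel[OF f_meas, of "box l u"]
    by (simp add: emeasure_distr preimage[symmetric])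
  also have "\<dots> = measure lebesgue (inv f ` box l u)"
    using measurable_orthogonal_image[OF inv_f, of "box l u"] by (simp add: emeasure_eq_measure2)
  also have "\<dots> = measure lebesgue (box l u)"
    using measure_orthogonal_image[OF inv_f, of "box l u"] by simp
  finally show "emeasure (distr lborel borel f) (box l u) = (\<Prod>b\<in>Basis. (u - l) \<bullet> b)"
    using box by (simp add: emeasure_eq_measure2)
qed simp

(* The library proves invariance under orthogonal maps only for well-ordered index types;
   conjugating with a relabelling of the coordinates transfers it to any finite index type. *)
typedef 'a wellordered_copy = "UNIV :: 'a set" by simp

instance wellordered_copy :: (finite) finite
proof
  show "finite (UNIV :: 'a wellordered_copy set)"
    using type_definition.Abs_image[OF type_definition_wellordered_copy] finite_imageI
    by (metis finite_class.finite_UNIV)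
qed

instantiation wellordered_copy :: (finite) linorder
begin
definition "x \<le> y \<longleftrightarrow> to_nat (Rep_wellordered_copy x) \<le> to_nat (Rep_wellordered_copy y)"
definition "x < y \<longleftrightarrow> to_nat (Rep_wellordered_copy x) < to_nat (Rep_wellordered_copy y)"
instance
  by standard (auto simp: less_eq_wellordered_copy_def less_wellordered_copy_def
      Rep_wellordered_copy_inject dest: injD[OF inj_to_nat])
end

instance wellordered_copy :: (finite) wellorder
proof (rule wf_wellorderI)
  show "wf {(x :: 'a wellordered_copy, y). x < y}"
    using wf_inv_image[OF wf_less, of "to_nat \<circ> Rep_wellordered_copy"]
    by (simp add: inv_image_def less_wellordered_copy_def)
qed standard

lemma lborel_distr_orthogonal:
  fixes f :: "real^'n::finite \<Rightarrow> real^'n"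
  assumes f: "orthogonal_transformation f"
  shows "distr lborel borel f = lborel"
proof -
  define P where "P = (\<lambda>v::real^'n. \<chi> j::'n wellordered_copy. v $ Rep_wellordered_copy j)"
  define Q where "Q = (\<lambda>w::real^'n wellordered_copy. \<chi> i::'n. w $ Abs_wellordered_copy i)"
  have bij_Rep: "bij Rep_wellordered_copy" and bij_Abs: "bij Abs_wellordered_copy"
    by (metis Abs_wellordered_copy_inverse Rep_wellordered_copy_inverse UNIV_I
        bij_betw_byWitness subset_UNIV)+
  have lin_P: "linear P" and lin_Q: "linear Q"
    unfolding P_def Q_def by (rule linear_permute_coordinates)+
  define f' where "f' = P \<circ> f \<circ> Q"
  have lin_f': "linear f'"
    unfolding f'_def using f lin_P lin_Q
    by (intro linear_compose) (auto simp: orthogonal_transformation_linear)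
  moreover have "norm (f' w) = norm w" for w
    by (simp add: f'_def P_def Q_def norm_permute_coordinates[OF bij_Rep]
        norm_permute_coordinates[OF bij_Abs] orthogonal_transformation_norm[OF f])
  ultimately have "orthogonal_transformation f'"
    by (simp add: orthogonal_transformation)
  then have distr_f': "distr lborel borel f' = lborel"
    by (rule lborel_distr_orthogonal_wellorder)
  have distr_P: "distr lborel borel P = lborel" and distr_Q: "distr lborel borel Q = lborel"
    unfolding P_def Q_def
    by (rule lborel_distr_permute_coordinates[OF bij_Rep],
        rule lborel_distr_permute_coordinates[OF bij_Abs])
  have "f = Q \<circ> f' \<circ> P"
    by (simp add: f'_def P_def Q_def fun_eq_iff vec_eq_iff Abs_wellordered_copy_inverse)
  then have "distr lborel borel f = distr (distr (distr lborel borel P) borel f') borel Q"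
    using borel_measurable_linear[OF linear_compose[OF lin_P lin_f']]
    by (simp add: distr_distr borel_measurable_linear lin_P lin_Q lin_f' comp_assoc)
  also have "\<dots> = lborel"
    by (simp add: distr_P distr_f' distr_Q)
  finally show ?thesis .
qed

section \<open>Volume of sets that are thin in orthonormal directions\<close>

definition orthonormal_frame :: "('i \<Rightarrow> 'a::real_inner) \<Rightarrow> bool" where
  "orthonormal_frame \<pi> \<longleftrightarrow> (\<forall>i j. \<pi> i \<bullet> \<pi> j = (if i = j then 1 else 0))"

lemma orthonormal_frame_inner:
  "orthonormal_frame \<pi> \<Longrightarrow> \<pi> i \<bullet> \<pi> j = (if i = j then 1 else 0)"
  by (simp add: orthonormal_frame_def)

lemma orthogonal_transformation_frame_coordinates:
  fixes \<pi> :: "'n::finite \<Rightarrow> real^'n"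
  assumes "orthonormal_frame \<pi>"
  shows "orthogonal_transformation (\<lambda>c. \<chi> i. c \<bullet> \<pi> i)"
proof -
  note orth = orthonormal_frame_inner[OF assms]
  define g where "g y = (\<Sum>i\<in>UNIV. y $ i *\<^sub>R \<pi> i)" for y :: "real^'n"
  have coord: "g y \<bullet> \<pi> j = y $ j" for y j
    by (simp add: g_def inner_sum_left orth if_distrib cong: if_cong)
  have "g y \<bullet> g y = y \<bullet> y" for y
  proof -
    have "g y \<bullet> g y = (\<Sum>j\<in>UNIV. y $ j * (g y \<bullet> \<pi> j))"
      by (subst (2) g_def) (simp add: inner_sum_right)
    also have "\<dots> = y \<bullet> y"
      by (simp only: coord) (simp add: inner_vec_def)
    finally show ?thesis .
  qed
  then have "orthogonal_transformation g"
    unfolding orthogonal_transformation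
    by (auto simp: g_def norm_eq_sqrt_inner intro!: linearI
        simp add: scaleR_add_left sum.distrib scaleR_sum_right)
  then have g_surj: "surj g"
    by (rule orthogonal_transformation_surj)
  have "linear (\<lambda>c. \<chi> i. c \<bullet> \<pi> i)"
    by (rule linearI) (simp_all add: vec_eq_iff inner_add_left)
  moreover have "norm (\<chi> i. c \<bullet> \<pi> i) = norm c" for c
  proof -
    obtain y where "c = g y"
      using g_surj by (metis surjD)
    moreover have "(\<chi> i. g y \<bullet> \<pi> i) = y"
      by (simp add: coord vec_eq_iff)
    ultimately show ?thesis
      using \<open>orthogonal_transformation g\<close> by (simp add: orthogonal_transformation_norm)
  qed
  ultimately show ?thesis
    by (simp add: orthogonal_transformation)
qed

lemma
  fixes \<pi> :: "'n::finite \<Rightarrow> real^'n"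
  assumes orth: "orthonormal_frame \<pi>" and lo_hi: "\<And>i. lo $ i \<le> hi $ i"
  shows lmeasurable_frame_box: "{c. \<forall>i. c \<bullet> \<pi> i \<in> {lo $ i..hi $ i}} \<in> lmeasurable"
    and measure_frame_box:
      "measure lebesgue {c. \<forall>i. c \<bullet> \<pi> i \<in> {lo $ i..hi $ i}} = (\<Prod>i\<in>UNIV. hi $ i - lo $ i)"
proof -
  define h where "h c = (\<chi> i. c \<bullet> \<pi> i)" for c :: "real^'n"
  have h: "orthogonal_transformation h"
    unfolding h_def using orth by (rule orthogonal_transformation_frame_coordinates)
  have h_meas: "h \<in> borel_measurable borel"
    using h by (intro borel_measurable_linear orthogonal_transformation_linear)
  have box: "{c. \<forall>i. c \<bullet> \<pi> i \<in> {lo $ i..hi $ i}} = h -` cbox lo hi"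
    by (auto simp: h_def mem_box_cart)
  have borel: "h -` cbox lo hi \<in> sets borel"
    using h_meas by (simp add: measurable_sets_borel)
  have "emeasure lebesgue (h -` cbox lo hi) = emeasure (distr lborel borel h) (cbox lo hi)"
    using borel h_meas by (simp add: emeasure_distr)
  also have "\<dots> = emeasure lborel (cbox lo hi)"
    by (simp add: lborel_distr_orthogonal[OF h])
  finally have em: "emeasure lebesgue (h -` cbox lo hi) = measure lborel (cbox lo hi)"
    by (simp add: emeasure_eq_measure2)
  then show "{c. \<forall>i. c \<bullet> \<pi> i \<in> {lo $ i..hi $ i}} \<in> lmeasurable"
    unfolding box using borel by (intro fmeasurableI) auto
  have "cbox lo hi \<noteq> {}"
    using lo_hi by (simp add: box_ne_empty cart_eq_inner_axis[symmetric] Basis_vec_def)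
  then have "measure lborel (cbox lo hi) = (\<Prod>i\<in>UNIV. hi $ i - lo $ i)"
    by (rule content_cbox_cart)
  with em show "measure lebesgue {c. \<forall>i. c \<bullet> \<pi> i \<in> {lo $ i..hi $ i}} = (\<Prod>i\<in>UNIV. hi $ i - lo $ i)"
    unfolding box using lo_hi by (simp add: measure_def prod_nonneg)
qed

lemma cInf_le_le_cInf_add:
  fixes X :: "real set"
  assumes "x \<in> X" and spread: "\<And>y z. y \<in> X \<Longrightarrow> z \<in> X \<Longrightarrow> y - z \<le> \<delta>"
  shows "Inf X \<le> x \<and> x \<le> Inf X + \<delta>"
proof
  show "Inf X \<le> x"
    using assms by (intro cInf_lower) (auto simp: bdd_below_def intro!: exI[of _ "x - \<delta>"] dest: spread)
  have "x - \<delta> \<le> Inf X"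
    using assms by (intro cInf_greatest) (auto dest: spread)
  then show "x \<le> Inf X + \<delta>"
    by simp
qed

lemma measure_le_thin_in_frame_directions:
  fixes \<pi> :: "'n::finite \<Rightarrow> real^'n" and S :: "(real^'n) set"
  assumes orth: "orthonormal_frame \<pi>"
    and S: "S \<subseteq> cball 0 s" and "0 \<le> s" and "0 \<le> \<delta>"
    and thin: "\<And>i c c'. i \<in> d \<Longrightarrow> c \<in> S \<Longrightarrow> c' \<in> S \<Longrightarrow> (c - c') \<bullet> \<pi> i \<le> \<delta>"
  shows "measure lebesgue S \<le> \<delta> ^ card d * (2 * s) ^ (CARD('n) - card d)"
proof (cases "S \<in> sets lebesgue")
  case False
  then show ?thesis
    using \<open>0 \<le> s\<close> \<open>0 \<le> \<delta>\<close> by (simp add: measure_notin_sets)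
next
  case True
  define m where "m i = Inf ((\<lambda>c. c \<bullet> \<pi> i) ` S)" for i
  define lo where "lo = (\<chi> i. if i \<in> d then m i else - s)"
  define hi where "hi = (\<chi> i. if i \<in> d then m i + \<delta> else s)"
  have lo_hi: "lo $ i \<le> hi $ i" for i
    using \<open>0 \<le> s\<close> \<open>0 \<le> \<delta>\<close> by (simp add: lo_def hi_def)
  have "c \<bullet> \<pi> i \<in> {lo $ i..hi $ i}" if "c \<in> S" for c i
  proof (cases "i \<in> d")
    case True
    then show ?thesis
      using cInf_le_le_cInf_add[of "c \<bullet> \<pi> i" "(\<lambda>c. c \<bullet> \<pi> i) ` S" \<delta>] thin \<open>c \<in> S\<close>
      by (auto simp: lo_def hi_def m_def inner_diff_left)
  next
    case False
    have "\<bar>c \<bullet> \<pi> i\<bar> \<le> norm c * norm (\<pi> i)"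
      by (rule Cauchy_Schwarz_ineq2)
    also have "\<dots> \<le> s"
      using S \<open>c \<in> S\<close> orthonormal_frame_inner[OF orth, of i i] by (auto simp: norm_eq_sqrt_inner)
    finally show ?thesis
      using False by (simp add: lo_def hi_def abs_le_iff)
  qed
  then have "S \<subseteq> {c. \<forall>i. c \<bullet> \<pi> i \<in> {lo $ i..hi $ i}}"
    by blast
  then have "measure lebesgue S \<le> measure lebesgue {c. \<forall>i. c \<bullet> \<pi> i \<in> {lo $ i..hi $ i}}"
    using True lmeasurable_frame_box[OF orth lo_hi] by (rule measure_mono_fmeasurable)
  also have "\<dots> = (\<Prod>i\<in>UNIV. if i \<in> d then \<delta> else 2 * s)"
    unfolding measure_frame_box[OF orth lo_hi] by (rule prod.cong) (auto simp: lo_def hi_def)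
  also have "\<dots> = \<delta> ^ card d * (2 * s) ^ (CARD('n) - card d)"
    by (simp add: prod.If_cases card_Diff_subset Compl_eq_Diff_UNIV)
  finally show ?thesis .
qed

lemma orthonormal_basis_extend:
  fixes B :: "'a::euclidean_space set"
  assumes B: "pairwise orthogonal B" and unit_B: "\<And>v. v \<in> B \<Longrightarrow> norm v = 1"
  obtains C where "B \<subseteq> C" "pairwise orthogonal C" "\<And>v. v \<in> C \<Longrightarrow> norm v = 1"
    "card C = DIM('a)"
proof -
  have "independent B"
    using B unit_B by (metis norm_zero pairwise_orthogonal_independent zero_neq_one)
  then have fin_B: "finite B" and dim_B: "dim (span B) = card B"
    by (simp_all add: independent_bound dim_eq_card_independent)
  define W where "W = {y. \<forall>x\<in>span B. orthogonal x y}"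
  have dim_W: "dim W + dim (span B) = DIM('a)"
    using dim_subspace_orthogonal_to_vectors[of "span B" UNIV] by (simp add: W_def)
  have "subspace W"
    unfolding W_def by (rule subspace_orthogonal_to_vectors)
  then obtain C' where C': "C' \<subseteq> W" "pairwise orthogonal C'" "\<And>v. v \<in> C' \<Longrightarrow> norm v = 1"
      "independent C'" "card C' = dim W"
    by (metis orthonormal_basis_subspace)
  have cross: "orthogonal v w" if "v \<in> B" "w \<in> C'" for v w
    using that C'(1) span_base by (auto simp: W_def)
  then have "B \<inter> C' = {}"
    using unit_B by (fastforce simp: orthogonal_def)
  then have "card (B \<union> C') = card B + card C'"
    using fin_B C'(4) by (simp add: card_Un_disjoint independent_bound)
  moreover have "pairwise orthogonal (B \<union> C')"
    using B C'(2) cross unfolding pairwise_def by (metis UnE orthogonal_commute)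
  ultimately show ?thesis
    using that[of "B \<union> C'"] unit_B C'(3,5) dim_B dim_W by auto
qed

lemma orthonormal_frame_extend:
  fixes B :: "(real^'n::finite) set"
  assumes "pairwise orthogonal B" and "\<And>v. v \<in> B \<Longrightarrow> norm v = 1"
  obtains \<pi> :: "'n \<Rightarrow> real^'n" where "orthonormal_frame \<pi>" and "inj \<pi>" and "B \<subseteq> range \<pi>"
proof -
  obtain C where C: "B \<subseteq> C" "pairwise orthogonal C" "\<And>v. v \<in> C \<Longrightarrow> norm v = 1"
    "card C = CARD('n)"
    using orthonormal_basis_extend[OF assms] by auto
  then have "finite C"
    by (metis card.infinite zero_less_card_finite less_irrefl)
  then obtain \<pi> where \<pi>: "bij_betw \<pi> (UNIV :: 'n set) C"
    using finite_same_card_bij[of "UNIV :: 'n set" C] C(4) by auto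
  have "orthonormal_frame \<pi>"
    using \<pi> C(2,3)
    by (auto simp: orthonormal_frame_def bij_betw_def inj_eq norm_eq_1 pairwise_def orthogonal_def)
  with \<pi> C(1) show ?thesis
    using that by (auto simp: bij_betw_def)
qed

lemma measure_le_thin_in_orthonormal_directions:
  fixes B S :: "(real^'n::finite) set"
  assumes B: "pairwise orthogonal B" "\<And>v. v \<in> B \<Longrightarrow> norm v = 1" "r \<le> card B"
    and S: "S \<subseteq> cball 0 s" and "0 < s" and "0 \<le> \<delta>"
    and thin: "\<And>v c c'. v \<in> B \<Longrightarrow> c \<in> S \<Longrightarrow> c' \<in> S \<Longrightarrow> (c - c') \<bullet> v \<le> \<delta>"
  shows "measure lebesgue S \<le> (\<delta> / (2 * s)) ^ r * (2 * s) ^ CARD('n)"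
proof -
  obtain \<pi> :: "'n \<Rightarrow> real^'n" where orth: "orthonormal_frame \<pi>" and "inj \<pi>" and "B \<subseteq> range \<pi>"
    using orthonormal_frame_extend[OF B(1,2)] by metis
  define k where "k = card (\<pi> -` B)"
  have "r \<le> k"
    using B(3) card_vimage_inj[OF \<open>inj \<pi>\<close> \<open>B \<subseteq> range \<pi>\<close>] by (simp add: k_def)
  have "k \<le> CARD('n)"
    unfolding k_def by (rule card_mono) auto
  have "0 < 2 * s"
    using \<open>0 < s\<close> by simp
  show ?thesis
  proof (cases "\<delta> \<le> 2 * s")
    case True
    have "measure lebesgue S \<le> \<delta> ^ k * (2 * s) ^ (CARD('n) - k)"
      unfolding k_def using \<open>0 < s\<close> \<open>0 \<le> \<delta>\<close> thin
      by (intro measure_le_thin_in_frame_directions[OF orth S]) auto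
    also have "\<dots> = (\<delta> / (2 * s)) ^ k * ((2 * s) ^ k * (2 * s) ^ (CARD('n) - k))"
      using \<open>0 < 2 * s\<close> by (simp add: power_divide)
    also have "\<dots> = (\<delta> / (2 * s)) ^ k * (2 * s) ^ CARD('n)"
      by (simp only: power_add[symmetric] le_add_diff_inverse[OF \<open>k \<le> CARD('n)\<close>])
    also have "\<dots> \<le> (\<delta> / (2 * s)) ^ r * (2 * s) ^ CARD('n)"
      using True \<open>r \<le> k\<close> \<open>0 \<le> \<delta>\<close> \<open>0 < 2 * s\<close>
      by (intro mult_right_mono power_decreasing) auto
    finally show ?thesis .
  next
    case False
    then have "1 * (2 * s) ^ CARD('n) \<le> (\<delta> / (2 * s)) ^ r * (2 * s) ^ CARD('n)"
      using \<open>0 < 2 * s\<close> by (intro mult_right_mono one_le_power) auto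
    moreover have "measure lebesgue S \<le> (2 * s) ^ CARD('n)"
      using measure_le_thin_in_frame_directions[OF orth S, of 0 "{}"] \<open>0 < s\<close> by simp
    ultimately show ?thesis
      by linarith
  qed
qed

section \<open>Singular values\<close>

lemma length_filter_ge_prefix:
  assumes "r \<le> length xs" and "\<forall>i<r. P (xs ! i)"
  shows "r \<le> length (filter P xs)"
proof -
  have "\<forall>x\<in>set (take r xs). P x"
    using assms by (auto simp: in_set_conv_nth)
  then have "length (filter P (take r xs)) = r"
    using assms(1) by simp
  moreover have "length (filter P xs) = length (filter P (take r xs)) + length (filter P (drop r xs))"
    by (metis append_take_drop_id filter_append length_append)
  ultimately show ?thesis
    by simp
qed

lemma length_filter_concat_replicate:
  "length (filter P (concat (map (\<lambda>e. replicate (n e) (f e)) es)))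
     = sum_list (map (\<lambda>e. if P (f e) then n e else 0) es)"
  by (induction es) auto

lemma length_filter_rev_sort: "length (filter P (rev (sort xs))) = length (filter P xs)"
  by (metis mset_filter mset_rev mset_sort size_mset)

lemma largest_singular_values_ge_imp_eigenspace_dims:
  fixes A :: "real^'a^'b"
  defines "M \<equiv> transpose A ** A"
  assumes "largest_singular_values_ge r \<sigma> A"
  shows "r \<le> (\<Sum>e | (\<exists>v. v \<noteq> 0 \<and> M *v v = e *\<^sub>R v) \<and> \<sigma> \<le> sqrt e.
                 dim {v. M *v v = e *\<^sub>R v})"
proof -
  define Ev where "Ev = {e. \<exists>v. v \<noteq> 0 \<and> M *v v = e *\<^sub>R v}"
  define dims where "dims e = (if \<sigma> \<le> sqrt e then dim {v. M *v v = e *\<^sub>R v} else 0)" for e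
  have "r \<le> length (filter (\<lambda>x. \<sigma> \<le> x) (singular_values A))"
    using assms(2) unfolding largest_singular_values_ge_def by (intro length_filter_ge_prefix) auto
  also have "\<dots> = sum_list (map dims (sorted_list_of_set Ev))"
    unfolding singular_values_def Let_def M_def[symmetric] Ev_def dims_def
      length_filter_rev_sort length_filter_concat_replicate ..
  finally have r_le: "r \<le> sum_list (map dims (sorted_list_of_set Ev))" .
  show ?thesis
  proof (cases "finite Ev")
    case True
    with r_le show ?thesis
      by (simp add: sum_list_distinct_conv_sum_set dims_def sum.inter_filter[symmetric] Ev_def)
  next
    case False
    (* then sorted_list_of_set Ev = [], so r = 0 *)
    with r_le show ?thesis
      by simp
  qed
qed

lemma inner_transpose_mult_self:
  fixes A :: "real^'a^'b"
  shows "((transpose A ** A) *v x) \<bullet> y = (A *v x) \<bullet> (A *v y)"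
  by (simp add: matrix_vector_mul_assoc[symmetric] dot_lmul_matrix)

lemma gram_eigenvectors_orthogonal:
  fixes A :: "real^'a^'b"
  assumes "(transpose A ** A) *v v = e *\<^sub>R v" and "(transpose A ** A) *v w = e' *\<^sub>R w"
    and "e \<noteq> e'"
  shows "v \<bullet> w = 0"
proof -
  have "e * (v \<bullet> w) = (A *v v) \<bullet> (A *v w)"
    using inner_transpose_mult_self[of A v w] assms(1) by simp
  also have "\<dots> = e' * (v \<bullet> w)"
    using inner_transpose_mult_self[of A w v] assms(2) by (simp add: inner_commute)
  finally show ?thesis
    using assms(3) by simp
qed

lemma abs_inner_gram_eigenvector_le:
  fixes A :: "real^'a^'b"
  assumes v: "(transpose A ** A) *v v = e *\<^sub>R v" "norm v = 1"
    and "0 < \<sigma>" and "\<sigma> \<le> sqrt e"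
  shows "\<sigma> * \<bar>x \<bullet> v\<bar> \<le> norm (A *v x)"
proof -
  have "0 < e"
    using assms(3,4) by (metis not_less order.strict_trans1 real_sqrt_le_0_iff)
  have "(A *v v) \<bullet> (A *v v) = e"
    using inner_transpose_mult_self[of A v v] v by (simp add: norm_eq_1)
  then have norm_Av: "norm (A *v v) = sqrt e"
    by (simp add: norm_eq_sqrt_inner)
  have "e * (x \<bullet> v) = (A *v v) \<bullet> (A *v x)"
    using inner_transpose_mult_self[of A v x] v by (simp add: inner_commute)
  then have "sqrt e * (sqrt e * \<bar>x \<bullet> v\<bar>) = \<bar>(A *v v) \<bullet> (A *v x)\<bar>"
    using \<open>0 < e\<close> by (metis abs_mult abs_of_pos mult.assoc real_sqrt_mult_self)
  also have "\<dots> \<le> sqrt e * norm (A *v x)"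
    using Cauchy_Schwarz_ineq2[of "A *v v" "A *v x"] by (simp add: norm_Av)
  finally have "sqrt e * \<bar>x \<bullet> v\<bar> \<le> norm (A *v x)"
    using \<open>0 < e\<close> by (simp add: mult_le_cancel_left_pos)
  then show ?thesis
    using assms(4) by (meson abs_ge_zero dual_order.trans mult_right_mono)
qed

lemma orthonormal_gram_eigenvectors:
  fixes A :: "real^'a::finite^'b::finite"
  assumes sv: "largest_singular_values_ge r \<sigma> A" and "0 < \<sigma>"
  obtains B :: "(real^'a) set" where "pairwise orthogonal B" "\<And>v. v \<in> B \<Longrightarrow> norm v = 1"
    "r \<le> card B" "\<And>v x. v \<in> B \<Longrightarrow> \<sigma> * \<bar>x \<bullet> v\<bar> \<le> norm (A *v x)"
proof -
  define E where "E e = {v. (transpose A ** A) *v v = e *\<^sub>R v}" for e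
  define F where "F = {e. (\<exists>v. v \<noteq> 0 \<and> (transpose A ** A) *v v = e *\<^sub>R v) \<and> \<sigma> \<le> sqrt e}"
  have r_le: "r \<le> (\<Sum>e\<in>F. dim (E e))"
    using largest_singular_values_ge_imp_eigenspace_dims[OF sv] by (simp add: E_def F_def)
  have "subspace (E e)" for e
    unfolding subspace_def E_def
    by (simp add: matrix_vector_right_distrib scaleR_add_right matrix_vector_mult_scaleR)
  then have "\<forall>e. \<exists>C. C \<subseteq> E e \<and> pairwise orthogonal C \<and> (\<forall>v\<in>C. norm v = 1) \<and> independent C
      \<and> card C = dim (E e)"
    by (metis orthonormal_basis_subspace)
  then obtain Bs where Bs: "\<And>e. Bs e \<subseteq> E e" "\<And>e. pairwise orthogonal (Bs e)"
    "\<And>e v. v \<in> Bs e \<Longrightarrow> norm v = 1" "\<And>e. independent (Bs e)" "\<And>e. card (Bs e) = dim (E e)"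
    by metis
  have orth_Bs: "v \<bullet> w = 0" if "v \<in> Bs e" "w \<in> Bs e'" "e \<noteq> e'" for v w e e'
    using gram_eigenvectors_orthogonal[of A v e w e'] that Bs(1) by (auto simp: E_def)
  define B where "B = (\<Union>e\<in>F. Bs e)"
  show ?thesis
  proof
    show "pairwise orthogonal B"
      using Bs(2) orth_Bs unfolding B_def pairwise_def orthogonal_def by blast
    show "norm v = 1" if "v \<in> B" for v
      using that Bs(3) by (auto simp: B_def)
    show "r \<le> card B"
    proof (cases "finite F")
      case True
      have "Bs e \<inter> Bs e' = {}" if "e \<noteq> e'" for e e'
        using orth_Bs[OF _ _ that] Bs(3) by (metis disjoint_iff inner_eq_zero_iff norm_zero zero_neq_one)
      then have "card B = (\<Sum>e\<in>F. card (Bs e))"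
        unfolding B_def using True Bs(4) by (intro card_UN_disjoint) (auto simp: independent_bound)
      with r_le show ?thesis
        by (simp add: Bs(5))
    next
      case False
      with r_le show ?thesis
        by simp
    qed
    show "\<sigma> * \<bar>x \<bullet> v\<bar> \<le> norm (A *v x)" if "v \<in> B" for v x
    proof -
      from that obtain e where "e \<in> F" "v \<in> Bs e"
        by (auto simp: B_def)
      then show ?thesis
        using Bs(1,3) abs_inner_gram_eigenvector_le[of A v e \<sigma> x] \<open>0 < \<sigma>\<close> by (auto simp: E_def F_def)
    qed
  qed
qed

lemma measure_le_of_linear_image_near:
  fixes A :: "real^'a::finite^'b::finite" and S :: "(real^'a) set"
  assumes sv: "largest_singular_values_ge r \<sigma> A" and "0 < \<sigma>" and "0 < s" and "0 \<le> \<eta>"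
    and S: "S \<subseteq> cball 0 s" and near: "\<And>c. c \<in> S \<Longrightarrow> norm (A *v c - y) \<le> \<eta>"
  shows "measure lebesgue S \<le> (\<eta> / (\<sigma> * s)) ^ r * (2 * s) ^ CARD('a)"
proof -
  obtain B where B: "pairwise orthogonal B" "\<And>v. v \<in> B \<Longrightarrow> norm v = 1" "r \<le> card B"
    and bound: "\<And>v x. v \<in> B \<Longrightarrow> \<sigma> * \<bar>x \<bullet> v\<bar> \<le> norm (A *v x)"
    using orthonormal_gram_eigenvectors[OF sv \<open>0 < \<sigma>\<close>] by metis
  have thin: "(c - c') \<bullet> v \<le> 2 * \<eta> / \<sigma>" if "v \<in> B" "c \<in> S" "c' \<in> S" for v c c'
  proof -
    have "\<sigma> * \<bar>(c - c') \<bullet> v\<bar> \<le> norm ((A *v c - y) - (A *v c' - y))"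
      using bound[OF that(1), of "c - c'"] by (simp add: matrix_vector_mult_diff_distrib)
    also have "\<dots> \<le> 2 * \<eta>"
      using norm_triangle_ineq4[of "A *v c - y" "A *v c' - y"] near[OF that(2)] near[OF that(3)]
      by linarith
    finally have "\<bar>(c - c') \<bullet> v\<bar> \<le> 2 * \<eta> / \<sigma>"
      using \<open>0 < \<sigma>\<close> by (simp add: field_simps)
    then show ?thesis
      by (meson abs_ge_self order_trans)
  qed
  have "measure lebesgue S \<le> (2 * \<eta> / \<sigma> / (2 * s)) ^ r * (2 * s) ^ CARD('a)"
    using \<open>0 \<le> \<eta>\<close> \<open>0 < \<sigma>\<close> \<open>0 < s\<close> thin
    by (intro measure_le_thin_in_orthonormal_directions[OF B S]) auto
  then show ?thesis
    by (simp add: mult.commute)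
qed

section \<open>Volume of balls\<close>

lemma measure_cball_ge_cube:
  assumes "0 < s"
  shows "(2 * s / sqrt DIM('a)) ^ DIM('a) \<le> measure lebesgue (cball (0::'a::euclidean_space) s)"
proof -
  define t where "t = s / sqrt DIM('a)"
  have "0 < t"
    using assms by (simp add: t_def)
  have cube: "cbox (- t *\<^sub>R One) (t *\<^sub>R One :: 'a) \<subseteq> cball (0::'a) s"
  proof
    fix x :: 'a
    assume "x \<in> cbox (- t *\<^sub>R One) (t *\<^sub>R One :: 'a)"
    then have "\<bar>x \<bullet> b\<bar> \<le> t" if "b \<in> Basis" for b
      using that by (auto simp: mem_box abs_le_iff)
    then have "infnorm x \<le> t"
      by (simp add: infnorm_Max)
    then have "norm x \<le> sqrt DIM('a) * t"
      using norm_le_infnorm[of x] by (smt (verit) mult_left_mono real_sqrt_ge_zero of_nat_0_le_iff)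
    then show "x \<in> cball 0 s"
      by (simp add: t_def)
  qed
  have "measure lebesgue (cbox (- t *\<^sub>R One) (t *\<^sub>R One :: 'a)) \<le> measure lebesgue (cball (0::'a) s)"
    by (rule measure_mono_fmeasurable[OF cube]) auto
  moreover have "measure lebesgue (cbox (- t *\<^sub>R One) (t *\<^sub>R One :: 'a)) = (2 * t) ^ DIM('a)"
    using \<open>0 < t\<close> by (simp add: content_cbox_if box_ne_empty)
  ultimately show ?thesis
    by (simp add: t_def)
qed

lemma power_le_fact_square: "n ^ n \<le> (fact n :: nat)\<^sup>2"
proof -
  have "(\<Prod>k=1..n. k) = (\<Prod>k=1..n. n + 1 - k)"
    by (rule prod.atLeastAtMost_rev[of "\<lambda>k. k" 1 n])
  then have "(fact n :: nat)\<^sup>2 = (\<Prod>k=1..n. k) * (\<Prod>k=1..n. n + 1 - k)"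
    by (simp add: power2_eq_square fact_prod)
  also have "\<dots> = (\<Prod>k=1..n. k * (n + 1 - k))"
    by (simp add: prod.distrib)
  finally have fact_sq: "(fact n :: nat)\<^sup>2 = (\<Prod>k=1..n. k * (n + 1 - k))" .
  have "n \<le> k * (n + 1 - k)" if k: "k \<in> {1..n}" for k
  proof -
    obtain a where "k = Suc a"
      using k by (cases k) auto
    moreover obtain b where "n = k + b"
      using k le_iff_add by auto
    ultimately show ?thesis
      by (simp add: algebra_simps)
  qed
  then have "(\<Prod>k=1..n. n) \<le> (\<Prod>k=1..n. k * (n + 1 - k))"
    by (intro prod_mono) auto
  then show ?thesis
    by (simp add: fact_sq)
qed

lemma sqrt_power_le_fact: "sqrt (real n) ^ n \<le> fact n"
proof -
  have "real n ^ n \<le> (fact n)\<^sup>2"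
    using power_le_fact_square[of n] by (metis of_nat_fact of_nat_le_iff of_nat_power)
  then have "sqrt (real n ^ n) \<le> sqrt ((fact n)\<^sup>2)"
    by (rule real_sqrt_le_mono)
  then show ?thesis
    by (simp add: real_sqrt_power)
qed

lemma measure_div_measure_cball_le:
  fixes S :: "'a::euclidean_space set"
  assumes "0 < s" and "0 \<le> y" and "measure lebesgue S \<le> y * (2 * s) ^ DIM('a)"
  shows "measure lebesgue S / measure lebesgue (cball (0::'a) s) \<le> fact DIM('a) * y"
proof -
  have "(2 * s) ^ DIM('a) = sqrt DIM('a) ^ DIM('a) * (2 * s / sqrt DIM('a)) ^ DIM('a)"
    by (simp add: power_divide)
  also have "\<dots> \<le> fact DIM('a) * measure lebesgue (cball (0::'a) s)"
    using assms by (intro mult_mono sqrt_power_le_fact measure_cball_ge_cube) auto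
  finally have "measure lebesgue S \<le> y * (fact DIM('a) * measure lebesgue (cball (0::'a) s))"
    using assms(2,3) by (meson mult_left_mono order_trans)
  then show ?thesis
    using content_cball_pos[OF \<open>0 < s\<close>, of 0] by (simp add: pos_divide_le_eq mult_ac)
qed

lemma norm_affine_part_le_on_sublevel_set:
  fixes g :: "real^'a \<Rightarrow> real^'b"
  assumes h_bound: "\<forall>c. norm c \<le> a \<longrightarrow> norm (g c - g0 - A *v c) \<le> L * (norm c)\<^sup>2"
    and "0 \<le> L" and "sqrt \<epsilon> \<le> a" and "0 \<le> \<epsilon>"
    and c: "norm (g c) \<le> L * \<epsilon>" "norm c \<le> sqrt \<epsilon>"
  shows "norm (A *v c - - g0) \<le> 2 * L * \<epsilon>"
proof -
  have "(norm c)\<^sup>2 \<le> \<epsilon>"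
    using c(2) \<open>0 \<le> \<epsilon>\<close> by (metis norm_ge_zero power_mono real_sqrt_pow2)
  moreover have "norm c \<le> a"
    using c(2) \<open>sqrt \<epsilon> \<le> a\<close> by simp
  ultimately have "norm (g c - g0 - A *v c) \<le> L * \<epsilon>"
    using h_bound \<open>0 \<le> L\<close> by (meson mult_left_mono order_trans)
  then show ?thesis
    using c(1) norm_triangle_ineq4[of "g c" "g c - g0 - A *v c"] by (simp add: add.commute)
qed

theorem lemma2:
  fixes g :: "real^'a \<Rightarrow> real^'b" and g0 :: "real^'b" and A :: "real^'a^'b"
    and a L \<sigma> \<epsilon> :: real and r :: nat
  assumes C2: "\<exists>g' :: real^'a \<Rightarrow> ((real^'a) \<Rightarrow>\<^sub>L (real^'b)).
               \<exists>g'' :: real^'a \<Rightarrow> ((real^'a) \<Rightarrow>\<^sub>L ((real^'a) \<Rightarrow>\<^sub>L (real^'b))).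
      (\<forall>c\<in>cball 0 a. (g has_derivative blinfun_apply (g' c)) (at c within cball 0 a)
                    \<and> (g' has_derivative blinfun_apply (g'' c)) (at c within cball 0 a))
      \<and> continuous_on (cball 0 a) g''"
    and h_bound: "\<forall>c. norm c \<le> a \<longrightarrow> norm (g c - g0 - A *v c) \<le> L * (norm c)^2"
    and L_pos: "L > 0"
    and sigma_pos: "\<sigma> > 0"
    and sv: "largest_singular_values_ge r \<sigma> A"
    and eps_pos: "\<epsilon> > 0"
    and eps_le: "sqrt \<epsilon> \<le> a"
  shows "measure lebesgue ({c. norm (g c) \<le> L * \<epsilon>} \<inter> cball 0 (sqrt \<epsilon>))
           / measure lebesgue (cball (0::real^'a) (sqrt \<epsilon>))
         \<le> fact CARD('a) * 2 ^ r * L ^ r * \<epsilon> powr (real r / 2) / \<sigma> ^ r"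
proof -
  define s where "s = sqrt \<epsilon>"
  define S where "S = {c. norm (g c) \<le> L * \<epsilon>} \<inter> cball (0::real^'a) s"
  define x where "x = 2 * L * s / \<sigma>"
  have "0 < s" and "s * s = \<epsilon>"
    using eps_pos by (simp_all add: s_def)
  then have "2 * L * \<epsilon> / (\<sigma> * s) = x"
    by (simp add: x_def \<open>s * s = \<epsilon>\<close>[symmetric])
  with \<open>0 < s\<close> have "measure lebesgue S \<le> x ^ r * (2 * s) ^ CARD('a)"
    using measure_le_of_linear_image_near[OF sv sigma_pos \<open>0 < s\<close>, of "2 * L * \<epsilon>" S "- g0"]
      norm_affine_part_le_on_sublevel_set[OF h_bound] L_pos eps_pos eps_le
    by (simp add: S_def s_def)
  then have "measure lebesgue S / measure lebesgue (cball (0::real^'a) s) \<le> fact CARD('a) * x ^ r"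
    using measure_div_measure_cball_le[OF \<open>0 < s\<close>, of "x ^ r" S] L_pos sigma_pos \<open>0 < s\<close>
    by (simp add: x_def)
  moreover have "\<epsilon> powr (real r / 2) = s ^ r"
    using eps_pos by (simp add: s_def powr_half_sqrt[symmetric] powr_power)
  ultimately show ?thesis
    by (simp add: S_def s_def x_def power_mult_distrib power_divide)
qed

end
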